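(* Let $m\geq1$, let $p_{1j},p_{2j}\in\mathbb{R}$, $w_{j}>0$, $d_{j}>0$, $h_{j}\in\mathbb{R}$ for $j=1,\ldots,m$, and let $f_{1}\leq g_{1}$, $f_{2}\leq g_{2}$, $a\leq b$ be reals. Consider the problem of minimizing over $(x_{1},x_{2})^{T}\in\mathbb{R}^{2}$ $$\max_{1\leq j\leq m}\big(w_{j}(|x_{1}-p_{1j}|+|x_{2}-p_{2j}|)+h_{j}\big)$$ subject to $|x_{1}-p_{1j}|+|x_{2}-p_{2j}|\leq d_{j}$ ($j=1,\ldots,m$), $f_{1}-x_{2}\leq x_{1}\leq g_{1}-x_{2}$, $f_{2}+x_{1}\leq x_{2}\leq g_{2}+x_{1}$, and $a\leq x_{1}\leq b$. Let $o_{1j}=p_{1j}+p_{2j}$ and $o_{2j}=p_{2j}-p_{1j}$ for $j=1,\ldots,m$, and let $b_{11}^{\ast}=b_{22}^{\ast}=0$, $b_{12}^{\ast}=2a$, $b_{21}^{\ast}=-2b$. Suppose that $$b_{ik}^{\ast}+\max_{1\leq l\leq m}\max\{o_{kl}-d_{l},f_{k}\}\leq\min_{1\leq j\leq m}\min\{o_{ij}+d_{j},g_{i}\},\qquad i,k=1,2.$$ Then the minimum value of the problem is $$\theta=\max_{1\leq j,l\leq m}\max\Bigg\{\frac{w_{l}h_{j}}{w_{j}+w_{l}}+\frac{w_{j}h_{l}}{w_{j}+w_{l}}+\frac{w_{j}w_{l}}{w_{j}+w_{l}}\max_{1\leq i,k\leq2}(b_{ik}^{\ast}-o_{ij}+o_{kl}),$$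 $$h_{j}+w_{j}\max_{1\leq i,k\leq2}\big(b_{ik}^{\ast}-o_{ij}+\max\{o_{kl}-d_{l},f_{k}\}\big),\ h_{l}+w_{l}\max_{1\leq i,k\leq2}\big(b_{ik}^{\ast}-\min\{d_{j}+o_{ij},g_{i}\}+o_{kl}\big)\Bigg\},$$ and all solution vectors $\bm{x}=(x_{1},x_{2})^{T}$ have entries $x_{1}=(y_{1}-y_{2})/2$, $x_{2}=(y_{1}+y_{2})/2$, where $y_{i}=\max\{b_{i1}^{\ast}+u_{1},b_{i2}^{\ast}+u_{2}\}$ for $i=1,2$ and the parameter vector $\bm{u}=(u_{1},u_{2})^{T}$ satisfies, for $k=1,2$, $$\max_{1\leq j\leq m}\max\left\{\frac{h_{j}-\theta}{w_{j}}+o_{kj},\ -d_{j}+o_{kj},\ f_{k}\right\}\leq u_{k}\leq\min_{1\leq i\leq2}\min_{1\leq j\leq m}\left(\min\left\{\frac{\theta-h_{j}}{w_{j}}+o_{ij},\ d_{j}+o_{ij},\ g_{i}\right\}-b_{ik}^{\ast}\right).$$ *)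

theory Defs
  imports Main "HOL.Real"
begin

definition sel :: "real \<Rightarrow> real \<Rightarrow> nat \<Rightarrow> real" where
  "sel x y i = (if i = 1 then x else y)"

definition oc :: "(nat \<Rightarrow> real) \<Rightarrow> (nat \<Rightarrow> real) \<Rightarrow> nat \<Rightarrow> nat \<Rightarrow> real" where
  "oc p1 p2 i j = (if i = 1 then p1 j + p2 j else p2 j - p1 j)"

definition bst :: "real \<Rightarrow> real \<Rightarrow> nat \<Rightarrow> nat \<Rightarrow> real" where
  "bst a b i k = (if i = k then 0 else if i = 1 then 2 * a else - 2 * b)"

definition objf :: "nat \<Rightarrow> (nat \<Rightarrow> real) \<Rightarrow> (nat \<Rightarrow> real) \<Rightarrow> (nat \<Rightarrow> real) \<Rightarrow> (nat \<Rightarrow> real)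
    \<Rightarrow> real \<Rightarrow> real \<Rightarrow> real" where
  "objf m p1 p2 w h x1 x2 =
     Max ((\<lambda>j. w j * (\<bar>x1 - p1 j\<bar> + \<bar>x2 - p2 j\<bar>) + h j) ` {1..m})"

definition feasible :: "nat \<Rightarrow> (nat \<Rightarrow> real) \<Rightarrow> (nat \<Rightarrow> real) \<Rightarrow> (nat \<Rightarrow> real)
    \<Rightarrow> real \<Rightarrow> real \<Rightarrow> real \<Rightarrow> real \<Rightarrow> real \<Rightarrow> real \<Rightarrow> real \<Rightarrow> real \<Rightarrow> bool" where
  "feasible m p1 p2 d f1 g1 f2 g2 a b x1 x2 \<longleftrightarrow>
     (\<forall>j\<in>{1..m}. \<bar>x1 - p1 j\<bar> + \<bar>x2 - p2 j\<bar> \<le> d j) \<and>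
     f1 - x2 \<le> x1 \<and> x1 \<le> g1 - x2 \<and>
     f2 + x1 \<le> x2 \<and> x2 \<le> g2 + x1 \<and>
     a \<le> x1 \<and> x1 \<le> b"

end

(*
  The rotation y1 = x1 + x2, y2 = x2 - x1 turns every L1-ball into an axis-parallel square.
  Hence the feasible points of cost at most t form, in the y-coordinates, a box
  [box_lo t, box_hi t] cut by the two difference constraints 2a <= y1 - y2 <= 2b, i.e. by
  y >= B y in max-plus notation.  As the cycle weight 2a - 2b of B is nonpositive, these points
  are exactly y = B* u with u ranging over a box, and they exist iff
  b*_ik + box_lo t k <= box_hi t i for all i, k.  Under the regularity hypothesis the latter
  splits, for every pair of sites j, l, into three inequalities that are linear in the radii
  (t - h_j) / w_j; solving them for t shows that theta is the least such level.
*)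
theory Submission
  imports Defs
begin

lemma sel_simps [simp]: "sel x y 1 = x" "sel x y (Suc 0) = x" "sel x y 2 = y"
  by (simp_all add: sel_def)

lemma bst_simps [simp]:
  "bst a b 1 1 = 0" "bst a b 2 2 = 0" "bst a b 1 2 = 2 * a" "bst a b 2 1 = - 2 * b"
  "bst a b (Suc 0) (Suc 0) = 0" "bst a b (Suc 0) 2 = 2 * a" "bst a b 2 (Suc 0) = - 2 * b"
  by (simp_all add: bst_def)

lemma abs_add_abs_le_iff: "\<bar>s\<bar> + \<bar>u\<bar> \<le> (c::real) \<longleftrightarrow> \<bar>s + u\<bar> \<le> c \<and> \<bar>u - s\<bar> \<le> c"
  by arith

lemma add_mult_le_iff_le_divide: "(w::real) > 0 \<Longrightarrow> h + w * X \<le> t \<longleftrightarrow> X \<le> (t - h) / w"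
  by (simp add: pos_le_divide_eq algebra_simps)

lemma weighted_mean_le_iff:
  fixes wj wl :: real
  assumes "wj > 0" "wl > 0"
  shows "wl * hj / (wj + wl) + wj * hl / (wj + wl) + wj * wl / (wj + wl) * X \<le> t
     \<longleftrightarrow> X \<le> (t - hj) / wj + (t - hl) / wl"
proof -
  have "wl * hj / (wj + wl) + wj * hl / (wj + wl) + wj * wl / (wj + wl) * X \<le> t
      \<longleftrightarrow> wl * hj + wj * hl + wj * wl * X \<le> t * (wj + wl)"
    using assms by (simp add: add_divide_distrib [symmetric] pos_divide_le_eq)
  also have "\<dots> \<longleftrightarrow> wj * wl * X \<le> (t - hj) * wl + (t - hl) * wj"
    by (simp add: algebra_simps)
  also have "\<dots> \<longleftrightarrow> X \<le> (t - hj) / wj + (t - hl) / wl"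
    using assms by (simp add: field_simps)
  finally show ?thesis .
qed

lemma Max_pairs_le_iff:
  "Max ((\<lambda>(i,k). F i k) ` (A \<times> B)) \<le> (c::'a::linorder) \<longleftrightarrow> (\<forall>i\<in>A. \<forall>k\<in>B. F i k \<le> c)"
  if "finite A" "finite B" "A \<noteq> {}" "B \<noteq> {}"
  using that by (simp add: split_paired_Ball_Sigma)

lemma add_Max_le_Min_iff:
  fixes c :: real
  assumes "finite S" "S \<noteq> {}" "finite T" "T \<noteq> {}"
  shows "c + Max (f ` S) \<le> Min (g ` T) \<longleftrightarrow> (\<forall>x\<in>S. \<forall>y\<in>T. c + f x \<le> g y)"
proof -
  have shift: "c + Max (f ` S) \<le> z \<longleftrightarrow> (\<forall>x\<in>S. c + f x \<le> z)" for z
  proof -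
    have "c + Max (f ` S) \<le> z \<longleftrightarrow> Max (f ` S) \<le> z - c"
      by linarith
    also have "\<dots> \<longleftrightarrow> (\<forall>x\<in>S. f x \<le> z - c)"
      using assms by simp
    finally show ?thesis
      by (simp add: le_diff_eq add.commute)
  qed
  show ?thesis
    unfolding shift using assms by simp
qed

text \<open>The hypothesis settles the four of the nine inequalities on the left that involve neither
  radius; the other five regroup into the three on the right.\<close>

lemma shifted_box_le_iff:
  fixes c ok oi rj rl dj dl fk gi :: real
  assumes "c + max (ok - dl) fk \<le> min (oi + dj) gi"
  shows "c + max (max (- rl + ok) (- dl + ok)) fk \<le> min (min (rj + oi) (dj + oi)) gi
     \<longleftrightarrow> c - oi + ok \<le> rj + rl \<and> c - oi + max (ok - dl) fk \<le> rj \<and> c - min (dj + oi) gi + ok \<le> rl"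
  using assms by (auto simp: max_def min_def)

text \<open>The solutions of \<open>y \<ge> B y\<close> in max-plus algebra are \<open>y = B* u\<close>; \<open>a \<le> b\<close> is the
  cycle condition making \<open>B*\<close> the matrix \<open>bst a b\<close>.\<close>

lemma max_plus_solutions:
  fixes L1 L2 U1 U2 a b y1 y2 :: real
  assumes "a \<le> b"
  shows "(L1 \<le> y1 \<and> y1 \<le> U1 \<and> L2 \<le> y2 \<and> y2 \<le> U2 \<and> 2 * a + y2 \<le> y1 \<and> y1 \<le> 2 * b + y2)
    \<longleftrightarrow> (\<exists>u1 u2. L1 \<le> u1 \<and> u1 \<le> min U1 (U2 + 2 * b) \<and> L2 \<le> u2 \<and> u2 \<le> min (U1 - 2 * a) U2
           \<and> y1 = max u1 (2 * a + u2) \<and> y2 = max (u1 - 2 * b) u2)"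
proof
  assume "L1 \<le> y1 \<and> y1 \<le> U1 \<and> L2 \<le> y2 \<and> y2 \<le> U2 \<and> 2 * a + y2 \<le> y1 \<and> y1 \<le> 2 * b + y2"
  then show "\<exists>u1 u2. L1 \<le> u1 \<and> u1 \<le> min U1 (U2 + 2 * b) \<and> L2 \<le> u2 \<and> u2 \<le> min (U1 - 2 * a) U2
           \<and> y1 = max u1 (2 * a + u2) \<and> y2 = max (u1 - 2 * b) u2"
    by (intro exI [of _ y1] exI [of _ y2]) auto
next
  assume "\<exists>u1 u2. L1 \<le> u1 \<and> u1 \<le> min U1 (U2 + 2 * b) \<and> L2 \<le> u2 \<and> u2 \<le> min (U1 - 2 * a) U2
           \<and> y1 = max u1 (2 * a + u2) \<and> y2 = max (u1 - 2 * b) u2"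
  then show "L1 \<le> y1 \<and> y1 \<le> U1 \<and> L2 \<le> y2 \<and> y2 \<le> U2 \<and> 2 * a + y2 \<le> y1 \<and> y1 \<le> 2 * b + y2"
    using assms by (auto simp: max_def)
qed

lemma max_plus_solvable_iff:
  fixes L1 L2 U1 U2 a b :: real
  assumes "a \<le> b"
  shows "(\<exists>y1 y2. L1 \<le> y1 \<and> y1 \<le> U1 \<and> L2 \<le> y2 \<and> y2 \<le> U2 \<and> 2 * a + y2 \<le> y1 \<and> y1 \<le> 2 * b + y2)
    \<longleftrightarrow> L1 \<le> U1 \<and> L2 \<le> U2 \<and> 2 * a + L2 \<le> U1 \<and> L1 \<le> 2 * b + U2"
proof
  assume "L1 \<le> U1 \<and> L2 \<le> U2 \<and> 2 * a + L2 \<le> U1 \<and> L1 \<le> 2 * b + U2"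
  then show "\<exists>y1 y2. L1 \<le> y1 \<and> y1 \<le> U1 \<and> L2 \<le> y2 \<and> y2 \<le> U2 \<and> 2 * a + y2 \<le> y1 \<and> y1 \<le> 2 * b + y2"
    using assms by (intro exI [of _ "max L1 (2 * a + L2)"] exI [of _ "max (L1 - 2 * b) L2"]) auto
qed auto

locale rectilinear_minimax =
  fixes m :: nat and p1 p2 w d h :: "nat \<Rightarrow> real" and f1 g1 f2 g2 a b :: real
  assumes sites_nonempty: "m \<ge> 1"
    and weights_pos: "\<forall>j\<in>{1..m}. w j > 0"
    and ab: "a \<le> b"
begin

abbreviation feas :: "real \<Rightarrow> real \<Rightarrow> bool" where
  "feas \<equiv> feasible m p1 p2 d f1 g1 f2 g2 a b"

abbreviation cost :: "real \<Rightarrow> real \<Rightarrow> real" where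
  "cost \<equiv> objf m p1 p2 w h"

definition radius :: "real \<Rightarrow> nat \<Rightarrow> real" where
  "radius t j = (t - h j) / w j"

definition box_lo :: "real \<Rightarrow> nat \<Rightarrow> real" where
  "box_lo t k = Max ((\<lambda>j. max (max ((h j - t) / w j + oc p1 p2 k j) (- d j + oc p1 p2 k j))
                       (sel f1 f2 k)) ` {1..m})"

definition box_hi :: "real \<Rightarrow> nat \<Rightarrow> real" where
  "box_hi t i = Min ((\<lambda>j. min (min ((t - h j) / w j + oc p1 p2 i j) (d j + oc p1 p2 i j))
                       (sel g1 g2 i)) ` {1..m})"

definition param_hi :: "real \<Rightarrow> nat \<Rightarrow> real" where
  "param_hi t k = Min ((\<lambda>(i,j). min (min ((t - h j) / w j + oc p1 p2 i j) (d j + oc p1 p2 i j))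
                       (sel g1 g2 i) - bst a b i k) ` ({1,2} \<times> {1..m}))"

definition pair_bound :: "nat \<Rightarrow> nat \<Rightarrow> real" where
  "pair_bound j l =
      max (max
        (w l * h j / (w j + w l) + w j * h l / (w j + w l)
          + w j * w l / (w j + w l) *
            Max ((\<lambda>(i,k). bst a b i k - oc p1 p2 i j + oc p1 p2 k l) ` ({1,2} \<times> {1,2})))
        (h j + w j *
            Max ((\<lambda>(i,k). bst a b i k - oc p1 p2 i j
                   + max (oc p1 p2 k l - d l) (sel f1 f2 k)) ` ({1,2} \<times> {1,2}))))
        (h l + w l *
            Max ((\<lambda>(i,k). bst a b i k - min (d j + oc p1 p2 i j) (sel g1 g2 i)
                   + oc p1 p2 k l) ` ({1,2} \<times> {1,2})))"

definition theta :: real where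
  "theta = Max ((\<lambda>(j,l). pair_bound j l) ` ({1..m} \<times> {1..m}))"

definition compatible :: "real \<Rightarrow> nat \<Rightarrow> nat \<Rightarrow> nat \<Rightarrow> nat \<Rightarrow> bool" where
  "compatible t i k j l \<longleftrightarrow>
     bst a b i k - oc p1 p2 i j + oc p1 p2 k l \<le> radius t j + radius t l
     \<and> bst a b i k - oc p1 p2 i j + max (oc p1 p2 k l - d l) (sel f1 f2 k) \<le> radius t j
     \<and> bst a b i k - min (d j + oc p1 p2 i j) (sel g1 g2 i) + oc p1 p2 k l \<le> radius t l"

lemma sites_ne: "{1..m} \<noteq> {}"
  using sites_nonempty by simp

lemma cost_le_iff: "cost x1 x2 \<le> t \<longleftrightarrow> (\<forall>j\<in>{1..m}. \<bar>x1 - p1 j\<bar> + \<bar>x2 - p2 j\<bar> \<le> radius t j)"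
  using sites_ne weights_pos
  by (auto simp: objf_def radius_def add.commute add_mult_le_iff_le_divide)

lemma box_lo_le_iff:
  "box_lo t k \<le> v \<longleftrightarrow>
     (\<forall>j\<in>{1..m}. oc p1 p2 k j - radius t j \<le> v \<and> oc p1 p2 k j - d j \<le> v) \<and> sel f1 f2 k \<le> v"
proof -
  have "(h j - t) / w j = - radius t j" for j
    by (simp add: radius_def minus_divide_left)
  then show ?thesis
    using sites_ne by (auto simp: box_lo_def)
qed

lemma le_box_hi_iff:
  "v \<le> box_hi t i \<longleftrightarrow>
     (\<forall>j\<in>{1..m}. v \<le> oc p1 p2 i j + radius t j \<and> v \<le> oc p1 p2 i j + d j) \<and> v \<le> sel g1 g2 i"
  using sites_ne by (auto simp: box_hi_def radius_def)

lemma le_param_hi_iff: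
  "v \<le> param_hi t k \<longleftrightarrow> v \<le> box_hi t 1 - bst a b 1 k \<and> v \<le> box_hi t 2 - bst a b 2 k"
proof -
  have "v \<le> box_hi t i - c \<longleftrightarrow> (\<forall>j\<in>{1..m}. v \<le> min (min ((t - h j) / w j + oc p1 p2 i j)
      (d j + oc p1 p2 i j)) (sel g1 g2 i) - c)" for i c
    using sites_ne by (auto simp: box_hi_def le_diff_eq)
  then show ?thesis
    using sites_ne by (auto simp: param_hi_def)
qed

lemma feasible_cost_le_iff:
  "feas x1 x2 \<and> cost x1 x2 \<le> t \<longleftrightarrow>
     box_lo t 1 \<le> x1 + x2 \<and> x1 + x2 \<le> box_hi t 1 \<and> box_lo t 2 \<le> x2 - x1 \<and> x2 - x1 \<le> box_hi t 2
     \<and> 2 * a + (x2 - x1) \<le> x1 + x2 \<and> x1 + x2 \<le> 2 * b + (x2 - x1)"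
proof -
  have rotate: "\<bar>x1 - p1 j\<bar> + \<bar>x2 - p2 j\<bar> \<le> c \<longleftrightarrow>
      \<bar>x1 + x2 - oc p1 p2 1 j\<bar> \<le> c \<and> \<bar>x2 - x1 - oc p1 p2 2 j\<bar> \<le> c" for j c
    using abs_add_abs_le_iff [of "x1 - p1 j" "x2 - p2 j" c] by (simp add: oc_def algebra_simps)
  show ?thesis
    unfolding feasible_def cost_le_iff box_lo_le_iff le_box_hi_iff rotate abs_le_iff
    by auto
qed

lemma level_set_parametrization:
  "feas x1 x2 \<and> cost x1 x2 \<le> t \<longleftrightarrow>
     (\<exists>u1 u2. (\<forall>k\<in>{1,2}. box_lo t k \<le> sel u1 u2 k \<and> sel u1 u2 k \<le> param_hi t k)
        \<and> (let y1 = max (bst a b 1 1 + u1) (bst a b 1 2 + u2);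
               y2 = max (bst a b 2 1 + u1) (bst a b 2 2 + u2)
           in x1 = (y1 - y2) / 2 \<and> x2 = (y1 + y2) / 2))"
proof -
  have coords: "(x1 = (y1 - y2) / 2 \<and> x2 = (y1 + y2) / 2) \<longleftrightarrow> (x1 + x2 = y1 \<and> x2 - x1 = y2)"
    for y1 y2 :: real
    by auto
  show ?thesis
    unfolding feasible_cost_le_iff max_plus_solutions [OF ab] le_param_hi_iff Let_def coords
    by (simp add: algebra_simps)
qed

lemma level_set_nonempty_iff_box:
  "(\<exists>x1 x2. feas x1 x2 \<and> cost x1 x2 \<le> t) \<longleftrightarrow> (\<forall>i\<in>{1,2}. \<forall>k\<in>{1,2}. bst a b i k + box_lo t k \<le> box_hi t i)"
proof -
  have "(\<exists>x1 x2. feas x1 x2 \<and> cost x1 x2 \<le> t) \<longleftrightarrow>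
      (\<exists>y1 y2. box_lo t 1 \<le> y1 \<and> y1 \<le> box_hi t 1 \<and> box_lo t 2 \<le> y2 \<and> y2 \<le> box_hi t 2
         \<and> 2 * a + y2 \<le> y1 \<and> y1 \<le> 2 * b + y2)"
    unfolding feasible_cost_le_iff
  proof
    assume "\<exists>y1 y2. box_lo t 1 \<le> y1 \<and> y1 \<le> box_hi t 1 \<and> box_lo t 2 \<le> y2 \<and> y2 \<le> box_hi t 2
         \<and> 2 * a + y2 \<le> y1 \<and> y1 \<le> 2 * b + y2"
    then obtain y1 y2 where "box_lo t 1 \<le> y1 \<and> y1 \<le> box_hi t 1 \<and> box_lo t 2 \<le> y2 \<and> y2 \<le> box_hi t 2
         \<and> 2 * a + y2 \<le> y1 \<and> y1 \<le> 2 * b + y2"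
      by blast
    then show "\<exists>x1 x2. box_lo t 1 \<le> x1 + x2 \<and> x1 + x2 \<le> box_hi t 1 \<and> box_lo t 2 \<le> x2 - x1 \<and> x2 - x1 \<le> box_hi t 2
       \<and> 2 * a + (x2 - x1) \<le> x1 + x2 \<and> x1 + x2 \<le> 2 * b + (x2 - x1)"
      by (intro exI [of _ "(y1 - y2) / 2"] exI [of _ "(y1 + y2) / 2"]) (simp add: field_simps)
  qed blast
  also have "\<dots> \<longleftrightarrow> (\<forall>i\<in>{1,2}. \<forall>k\<in>{1,2}. bst a b i k + box_lo t k \<le> box_hi t i)"
    unfolding max_plus_solvable_iff [OF ab] by auto
  finally show ?thesis .
qed

lemma pair_bound_le_iff:
  assumes "j \<in> {1..m}" "l \<in> {1..m}"
  shows "pair_bound j l \<le> t \<longleftrightarrow> (\<forall>i\<in>{1,2}. \<forall>k\<in>{1,2}. compatible t i k j l)"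
proof -
  have wj: "w j > 0" and wl: "w l > 0"
    using weights_pos assms by auto
  have Max4: "Max ((\<lambda>(i,k). F i k) ` ({1,2} \<times> {1,2})) \<le> c
      \<longleftrightarrow> (\<forall>i\<in>{1,2::nat}. \<forall>k\<in>{1,2::nat}. F i k \<le> (c::real))" for F c
    by (rule Max_pairs_le_iff) auto
  show ?thesis
    unfolding pair_bound_def max.bounded_iff weighted_mean_le_iff [OF wj wl]
      add_mult_le_iff_le_divide [OF wj] add_mult_le_iff_le_divide [OF wl] Max4
      compatible_def radius_def
    by blast
qed

lemma theta_le_iff:
  "theta \<le> t \<longleftrightarrow> (\<forall>j\<in>{1..m}. \<forall>l\<in>{1..m}. \<forall>i\<in>{1,2}. \<forall>k\<in>{1,2}. compatible t i k j l)"
  using sites_ne pair_bound_le_iff by (auto simp: theta_def)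

end

locale rectilinear_minimax_regular = rectilinear_minimax +
  assumes regular: "\<forall>i\<in>{1,2}. \<forall>k\<in>{1,2}.
       bst a b i k + Max ((\<lambda>l. max (oc p1 p2 k l - d l) (sel f1 f2 k)) ` {1..m})
         \<le> Min ((\<lambda>j. min (oc p1 p2 i j + d j) (sel g1 g2 i)) ` {1..m})"
begin

lemma bst_add_box_lo_le_box_hi_iff:
  assumes ik: "i \<in> {1,2}" "k \<in> {1,2}"
  shows "bst a b i k + box_lo t k \<le> box_hi t i \<longleftrightarrow> (\<forall>l\<in>{1..m}. \<forall>j\<in>{1..m}. compatible t i k j l)"
proof -
  note sites_Max_le_Min = add_Max_le_Min_iff [OF finite_atLeastAtMost sites_ne finite_atLeastAtMost sites_ne]
  have pairwise:
    "bst a b i k + max (max ((h l - t) / w l + oc p1 p2 k l) (- d l + oc p1 p2 k l)) (sel f1 f2 k)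
       \<le> min (min ((t - h j) / w j + oc p1 p2 i j) (d j + oc p1 p2 i j)) (sel g1 g2 i)
     \<longleftrightarrow> compatible t i k j l"
    if "l \<in> {1..m}" "j \<in> {1..m}" for l j
  proof -
    have "bst a b i k + max (oc p1 p2 k l - d l) (sel f1 f2 k) \<le> min (oc p1 p2 i j + d j) (sel g1 g2 i)"
      using regular ik that unfolding sites_Max_le_Min by blast
    moreover have "(h l - t) / w l = - radius t l"
      by (simp add: radius_def minus_divide_left)
    ultimately show ?thesis
      unfolding compatible_def radius_def [symmetric] by (simp only: shifted_box_le_iff)
  qed
  show ?thesis
    unfolding box_lo_def box_hi_def sites_Max_le_Min using pairwise by blast
qed

lemma level_set_nonempty_iff_theta_le:
  "(\<exists>x1 x2. feas x1 x2 \<and> cost x1 x2 \<le> t) \<longleftrightarrow> theta \<le> t"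
  unfolding level_set_nonempty_iff_box theta_le_iff using bst_add_box_lo_le_box_hi_iff by auto

lemma theta_le_cost: "feas x1 x2 \<Longrightarrow> theta \<le> cost x1 x2"
  using level_set_nonempty_iff_theta_le by blast

lemma optimal_iff_cost_le_theta: "feas x1 x2 \<and> cost x1 x2 = theta \<longleftrightarrow> feas x1 x2 \<and> cost x1 x2 \<le> theta"
  using theta_le_cost by force

end

theorem corollary3:
  fixes m :: nat and p1 p2 w d h :: "nat \<Rightarrow> real"
    and f1 g1 f2 g2 a b :: real
  assumes m: "m \<ge> 1"
    and w: "\<forall>j\<in>{1..m}. w j > 0"
    and d: "\<forall>j\<in>{1..m}. d j > 0"
    and fg1: "f1 \<le> g1" and fg2: "f2 \<le> g2" and ab: "a \<le> b"
    and cond: "\<forall>i\<in>{1,2}. \<forall>k\<in>{1,2}.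
       bst a b i k + Max ((\<lambda>l. max (oc p1 p2 k l - d l) (sel f1 f2 k)) ` {1..m})
         \<le> Min ((\<lambda>j. min (oc p1 p2 i j + d j) (sel g1 g2 i)) ` {1..m})"
  defines "\<theta> \<equiv> Max ((\<lambda>(j,l).
      max (max
        (w l * h j / (w j + w l) + w j * h l / (w j + w l)
          + w j * w l / (w j + w l) *
            Max ((\<lambda>(i,k). bst a b i k - oc p1 p2 i j + oc p1 p2 k l) ` ({1,2} \<times> {1,2})))
        (h j + w j *
            Max ((\<lambda>(i,k). bst a b i k - oc p1 p2 i j
                   + max (oc p1 p2 k l - d l) (sel f1 f2 k)) ` ({1,2} \<times> {1,2}))))
        (h l + w l *
            Max ((\<lambda>(i,k). bst a b i k - min (d j + oc p1 p2 i j) (sel g1 g2 i)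
                   + oc p1 p2 k l) ` ({1,2} \<times> {1,2}))))
      ` ({1..m} \<times> {1..m}))"
  shows "(\<exists>x1 x2. feasible m p1 p2 d f1 g1 f2 g2 a b x1 x2 \<and> objf m p1 p2 w h x1 x2 = \<theta>)
       \<and> (\<forall>x1 x2. feasible m p1 p2 d f1 g1 f2 g2 a b x1 x2 \<longrightarrow> \<theta> \<le> objf m p1 p2 w h x1 x2)
       \<and> (\<forall>x1 x2. (feasible m p1 p2 d f1 g1 f2 g2 a b x1 x2 \<and> objf m p1 p2 w h x1 x2 = \<theta>)
            \<longleftrightarrow> (\<exists>u1 u2.
                  (\<forall>k\<in>{1,2}.
                     Max ((\<lambda>j. max (max ((h j - \<theta>) / w j + oc p1 p2 k j) (- d j + oc p1 p2 k j))
                                  (sel f1 f2 k)) ` {1..m})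
                       \<le> sel u1 u2 k
                   \<and> sel u1 u2 k \<le>
                     Min ((\<lambda>(i,j). min (min ((\<theta> - h j) / w j + oc p1 p2 i j) (d j + oc p1 p2 i j))
                                     (sel g1 g2 i) - bst a b i k) ` ({1,2} \<times> {1..m})))
                \<and> (let y1 = max (bst a b 1 1 + u1) (bst a b 1 2 + u2);
                       y2 = max (bst a b 2 1 + u1) (bst a b 2 2 + u2)
                   in x1 = (y1 - y2) / 2 \<and> x2 = (y1 + y2) / 2)))"
proof -
  \<comment> \<open>\<open>d\<close>, \<open>fg1\<close>, \<open>fg2\<close> are unused: \<open>cond\<close> with \<open>i = k\<close> already gives
    \<open>f\<^sub>k \<le> g\<^sub>k\<close> and \<open>d j \<ge> 0\<close>.\<close>
  interpret rectilinear_minimax_regular m p1 p2 w d h f1 g1 f2 g2 a b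
    using m w ab cond by unfold_locales
  have \<theta>: "\<theta> = theta"
    unfolding \<theta>_def theta_def pair_bound_def ..
  show ?thesis
    unfolding \<theta>
  proof (intro conjI allI impI)
    show "\<exists>x1 x2. feas x1 x2 \<and> cost x1 x2 = theta"
      using level_set_nonempty_iff_theta_le optimal_iff_cost_le_theta by blast
    show "theta \<le> cost x1 x2" if "feas x1 x2" for x1 x2
      using that by (rule theta_le_cost)
  qed (simp only: optimal_iff_cost_le_theta level_set_parametrization box_lo_def param_hi_def)
qed

end
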